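(* Let $\tau\in\{1,\dots,c\}$ with $\tau\le c/2$, and let $0<x_L<x_H<1$ with $x^*-x_L=x_H-x^*$. Consider the two-price policy with parameters $x_L,x_H,\tau$ and its steady-state distribution $\pi$, and set $\varsigma_L=\frac{1}{\pi_0}\sum_{j=1}^\tau\pi_j$, $\varsigma_H=\frac1{\pi_0}\sum_{j=\tau+1}^c\pi_j$. Then $$\varsigma_L\ge\Big(1-\frac{\tau^2}{2c}\Big)\frac{(x^*/x_L)^\tau-1}{1-x_L/x^*},\qquad \varsigma_L-\varsigma_H\le\frac{(x^*/x_L)^\tau}{1-x_L/x^*}\Big(\frac{2\tau^2}{c}+(x^*/x_H)^\tau\Big).$$
   Context: Setting. Fix $c\in\mathbb N$ (number of identical units of a single reusable resource), an arrival rate $\lambda>0$ and a mean usage duration $d>0$, with $x^*:=c/(\lambda d)\in(0,1)$. A stock-dependent policy is a vector $\mathbf x=(x_1,\dots,x_c)\in[0,1]^c$, where $x_j$ is the admission probability used when exactly $j$ units are available. Its steady-state distribution is the unique probability vector $\pi=(\pi_0,\dots,\pi_c)$ satisfying $\pi_j\lambda x_j=\pi_{j-1}(c-j+1)/d$ for all $j\in\{1,\dots,c\}$. A two-price policy with parameters $x_L,x_H\in[0,1]$ and $\tau\in\{1,\dots,c\}$ sets $x_j=x_L$ for $1\le j\le\tau$ and $x_j=x_H$ for $\tau<j\le c$. *)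

theory Defs
  imports Complex_Main
begin

definition xstar :: "nat \<Rightarrow> real \<Rightarrow> real \<Rightarrow> real" where
  "xstar c lam d = real c / (lam * d)"

definition is_steady_state ::
  "nat \<Rightarrow> real \<Rightarrow> real \<Rightarrow> (nat \<Rightarrow> real) \<Rightarrow> (nat \<Rightarrow> real) \<Rightarrow> bool" where
  "is_steady_state c lam d x \<pi> \<longleftrightarrow>
     (\<forall>j\<in>{0..c}. 0 \<le> \<pi> j) \<and> (\<Sum>j=0..c. \<pi> j) = 1 \<and>
     (\<forall>j\<in>{1..c}. \<pi> j * lam * x j = \<pi> (j - 1) * (real c - real j + 1) / d)"

definition two_price :: "nat \<Rightarrow> real \<Rightarrow> real \<Rightarrow> nat \<Rightarrow> nat \<Rightarrow> real" where
  "two_price c xL xH \<tau> j = (if j \<le> \<tau> then xL else xH)"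

end

theory Submission
  imports Defs "HOL-Analysis.Infinite_Products"
begin

text \<open>The balance equations give \<open>\<pi>\<^sub>j / \<pi>\<^sub>0 = \<Prod>\<^sub>i\<^sub><\<^sub>j (x*/x\<^sub>i\<^sub>+\<^sub>1)(1 - i/c)\<close>,
  i.e. \<open>(x*/x\<^sub>L)\<^sup>j P\<^sub>j\<close> for \<open>j \<le> \<tau>\<close> and \<open>(x*/x\<^sub>L)\<^sup>\<tau> (x*/x\<^sub>H)\<^sup>j\<^sup>-\<^sup>\<tau> P\<^sub>j\<close> above,
  where \<open>P\<^sub>j = \<Prod>\<^sub>i\<^sub><\<^sub>j (1 - i/c)\<close> lies between \<open>1 - j\<^sup>2/(2c)\<close> (Weierstrass product
  inequality) and 1. With these bounds on \<open>P\<^sub>j\<close> both sums become geometric series, and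
  the symmetry \<open>x* - x\<^sub>L = x\<^sub>H - x*\<close> makes their denominators agree up to sign:
  \<open>1 - x\<^sub>H/x* = -(1 - x\<^sub>L/x*)\<close>. For the difference only the terms
  \<open>\<tau> < j \<le> 2\<tau> \<le> c\<close> of \<open>\<varsigma>\<^sub>H\<close> are kept, on which \<open>P\<^sub>j \<ge> 1 - 2\<tau>\<^sup>2/c\<close>.\<close>

lemma sum_gp_from_one:
  fixes r :: real
  assumes "r \<noteq> 0" "r \<noteq> 1"
  shows "(\<Sum>j=1..n. r ^ j) = (r ^ n - 1) / (1 - 1 / r)"
proof -
  have "(1 - r) * (\<Sum>j=1..n. r ^ j) = r - r ^ Suc n" if "1 \<le> n"
    using sum_gp_multiplied[OF that] by simp
  then have "(1 - r) * (\<Sum>j=1..n. r ^ j) = r * (1 - r ^ n)"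
    by (cases "n = 0") (simp_all add: algebra_simps)
  then show ?thesis
    using assms by (simp add: field_simps)
qed

lemma sum_lessThan_of_nat_le_half_square: "(\<Sum>i<j. real i) \<le> real j ^ 2 / 2"
  by (induction j) (simp_all add: power2_eq_square field_simps)

lemma prod_one_minus_div_ge:
  assumes "j \<le> c"
  shows "1 - real j ^ 2 / (2 * real c) \<le> (\<Prod>i<j. 1 - real i / real c)"
proof -
  have "(\<Sum>i<j. real i) / real c \<le> (real j ^ 2 / 2) / real c"
    by (intro divide_right_mono sum_lessThan_of_nat_le_half_square) simp
  then have "1 - real j ^ 2 / (2 * real c) \<le> 1 - (\<Sum>i<j. real i) / real c"
    by simp
  also have "\<dots> = 1 - (\<Sum>i<j. real i / real c)"
    by (simp add: sum_divide_distrib)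
  also have "\<dots> \<le> (\<Prod>i<j. 1 - real i / real c)"
    using assms by (intro Weierstrass_prod_ineq) auto
  finally show ?thesis .
qed

lemma prod_one_minus_div_le_one:
  assumes "j \<le> c"
  shows "(\<Prod>i<j. 1 - real i / real c) \<le> 1"
  using assms by (intro prod_le_1) auto

lemma steady_state_step:
  assumes ss: "is_steady_state c lam d x \<pi>" and "lam > 0" "d > 0"
    and "x (Suc j) > 0" "Suc j \<le> c"
  shows "\<pi> (Suc j) = \<pi> j * (xstar c lam d / x (Suc j)) * (1 - real j / real c)"
proof -
  have c_pos: "real c > 0"
    using \<open>Suc j \<le> c\<close> by simp
  have "\<pi> (Suc j) * lam * x (Suc j) = \<pi> j * (real c - real (Suc j) + 1) / d"
    using ss \<open>Suc j \<le> c\<close> unfolding is_steady_state_def by force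
  then have "\<pi> (Suc j) = \<pi> j * (real c - real j) / (lam * d * x (Suc j))"
    using assms(2-4) by (simp add: field_simps)
  also have "\<dots> = \<pi> j * (real c / (lam * d) / x (Suc j)) * (1 - real j / real c)"
    using assms(2-4) c_pos by (simp add: field_simps)
  finally show ?thesis
    unfolding xstar_def .
qed

lemma steady_state_product_form:
  assumes ss: "is_steady_state c lam d x \<pi>" and "lam > 0" "d > 0"
    and x_pos: "\<forall>j\<in>{1..c}. x j > 0" and "j \<le> c"
  shows "\<pi> j = \<pi> 0 * (\<Prod>i<j. xstar c lam d / x (Suc i)) * (\<Prod>i<j. 1 - real i / real c)"
  using \<open>j \<le> c\<close>
proof (induction j)
  case (Suc j)
  have "x (Suc j) > 0"
    using x_pos Suc.prems by simp
  then have "\<pi> (Suc j) = \<pi> j * (xstar c lam d / x (Suc j)) * (1 - real j / real c)"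
    using steady_state_step[OF ss \<open>lam > 0\<close> \<open>d > 0\<close>] Suc.prems by blast
  then show ?case
    using Suc by (simp add: mult_ac)
qed simp

lemma steady_state_pi0_pos:
  assumes ss: "is_steady_state c lam d x \<pi>" and "lam > 0" "d > 0"
    and x_pos: "\<forall>j\<in>{1..c}. x j > 0"
  shows "\<pi> 0 > 0"
proof (rule ccontr)
  assume "\<not> \<pi> 0 > 0"
  then have "\<pi> 0 = 0"
    using ss unfolding is_steady_state_def by force
  then have "\<pi> j = 0" if "j \<le> c" for j
    using steady_state_product_form[OF assms that] by simp
  then show False
    using ss unfolding is_steady_state_def by simp
qed

lemma two_price_prod_ratio:
  "(\<Prod>i<j. a / two_price c xL xH \<tau> (Suc i)) = (a / xL) ^ min j \<tau> * (a / xH) ^ (j - \<tau>)"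
proof (induction j)
  case (Suc j)
  show ?case
  proof (cases "j < \<tau>")
    case True
    then have "min (Suc j) \<tau> = Suc (min j \<tau>)" "Suc j - \<tau> = 0" "j - \<tau> = 0"
      by auto
    with True Suc.IH show ?thesis
      by (simp add: two_price_def)
  next
    case False
    then have "min (Suc j) \<tau> = min j \<tau>" "Suc j - \<tau> = Suc (j - \<tau>)"
      by auto
    with False Suc.IH show ?thesis
      by (simp add: two_price_def)
  qed
qed simp

locale two_price_steady_state =
  fixes c \<tau> :: nat and lam d xL xH :: real and \<pi> :: "nat \<Rightarrow> real"
  assumes lam_pos: "lam > 0" and d_pos: "d > 0"
    and xL_pos: "0 < xL" and xL_lt_xstar: "xL < xstar c lam d"
    and prices_symmetric: "xstar c lam d - xL = xH - xstar c lam d"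
    and tau_half: "2 * \<tau> \<le> c"
    and ss: "is_steady_state c lam d (two_price c xL xH \<tau>) \<pi>"
begin

abbreviation x_star :: real where "x_star \<equiv> xstar c lam d"

lemma x_star_pos: "x_star > 0"
  using xL_pos xL_lt_xstar by linarith

lemma relative_gap_pos: "1 - xL / x_star > 0"
  using xL_lt_xstar x_star_pos by (simp add: field_simps)

lemma policy_pos: "\<forall>j\<in>{1..c}. two_price c xL xH \<tau> j > 0"
  using xL_pos xL_lt_xstar prices_symmetric by (auto simp: two_price_def)

lemma pi0_pos: "\<pi> 0 > 0"
  using steady_state_pi0_pos[OF ss lam_pos d_pos policy_pos] .

lemma pi_ratio:
  assumes "j \<le> c"
  shows "\<pi> j / \<pi> 0 = (x_star / xL) ^ min j \<tau> * (x_star / xH) ^ (j - \<tau>) *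
    (\<Prod>i<j. 1 - real i / real c)"
  using steady_state_product_form[OF ss lam_pos d_pos policy_pos assms] pi0_pos
  by (simp add: two_price_prod_ratio)

lemma low_sum_eq:
  "(\<Sum>j=1..\<tau>. \<pi> j) / \<pi> 0 = (\<Sum>j=1..\<tau>. (x_star / xL) ^ j * (\<Prod>i<j. 1 - real i / real c))"
  unfolding sum_divide_distrib
  by (rule sum.cong) (use tau_half in \<open>simp_all add: pi_ratio\<close>)

lemma low_geometric_sum:
  "(\<Sum>j=1..\<tau>. (x_star / xL) ^ j) = ((x_star / xL) ^ \<tau> - 1) / (1 - xL / x_star)"
  using sum_gp_from_one[of "x_star / xL" \<tau>] xL_pos xL_lt_xstar by simp

lemma high_geometric_sum:
  "(\<Sum>k=1..\<tau>. (x_star / xH) ^ k) = (1 - (x_star / xH) ^ \<tau>) / (1 - xL / x_star)"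
proof -
  have xH_eq: "xH = 2 * x_star - xL"
    using prices_symmetric by linarith
  have gap: "1 - 1 / (x_star / xH) = - (1 - xL / x_star)"
    using x_star_pos unfolding xH_eq by (simp add: field_simps)
  have "xH > x_star"
    using prices_symmetric xL_lt_xstar by linarith
  then have "(\<Sum>k=1..\<tau>. (x_star / xH) ^ k) = ((x_star / xH) ^ \<tau> - 1) / (1 - 1 / (x_star / xH))"
    using x_star_pos by (intro sum_gp_from_one) auto
  also have "\<dots> = (1 - (x_star / xH) ^ \<tau>) / (1 - xL / x_star)"
    unfolding gap by (metis minus_diff_eq minus_divide_divide)
  finally show ?thesis .
qed

lemma low_sum_lower_bound:
  "(1 - real \<tau> ^ 2 / (2 * real c)) * (((x_star / xL) ^ \<tau> - 1) / (1 - xL / x_star))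
     \<le> (\<Sum>j=1..\<tau>. \<pi> j) / \<pi> 0"
proof -
  have "(1 - real \<tau> ^ 2 / (2 * real c)) * (((x_star / xL) ^ \<tau> - 1) / (1 - xL / x_star))
      = (\<Sum>j=1..\<tau>. (1 - real \<tau> ^ 2 / (2 * real c)) * (x_star / xL) ^ j)"
    by (simp only: low_geometric_sum[symmetric] sum_distrib_left)
  also have "\<dots> \<le> (\<Sum>j=1..\<tau>. (x_star / xL) ^ j * (\<Prod>i<j. 1 - real i / real c))"
  proof (rule sum_mono)
    fix j assume j: "j \<in> {1..\<tau>}"
    have "real j ^ 2 / (2 * real c) \<le> real \<tau> ^ 2 / (2 * real c)"
      using j by (intro divide_right_mono power_mono) auto
    then have "1 - real \<tau> ^ 2 / (2 * real c) \<le> (\<Prod>i<j. 1 - real i / real c)"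
      using prod_one_minus_div_ge[of j c] j tau_half by simp
    then show "(1 - real \<tau> ^ 2 / (2 * real c)) * (x_star / xL) ^ j
        \<le> (x_star / xL) ^ j * (\<Prod>i<j. 1 - real i / real c)"
      using x_star_pos xL_pos by (simp add: mult.commute mult_left_mono)
  qed
  also have "\<dots> = (\<Sum>j=1..\<tau>. \<pi> j) / \<pi> 0"
    by (rule low_sum_eq[symmetric])
  finally show ?thesis .
qed

lemma low_sum_upper_bound:
  "(\<Sum>j=1..\<tau>. \<pi> j) / \<pi> 0 \<le> ((x_star / xL) ^ \<tau> - 1) / (1 - xL / x_star)"
proof -
  have "(\<Sum>j=1..\<tau>. \<pi> j) / \<pi> 0
      = (\<Sum>j=1..\<tau>. (x_star / xL) ^ j * (\<Prod>i<j. 1 - real i / real c))"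
    by (rule low_sum_eq)
  also have "\<dots> \<le> (\<Sum>j=1..\<tau>. (x_star / xL) ^ j)"
  proof (rule sum_mono)
    fix j assume "j \<in> {1..\<tau>}"
    then have "(\<Prod>i<j. 1 - real i / real c) \<le> 1"
      using prod_one_minus_div_le_one[of j c] tau_half by simp
    then show "(x_star / xL) ^ j * (\<Prod>i<j. 1 - real i / real c) \<le> (x_star / xL) ^ j"
      using x_star_pos xL_pos by (simp add: mult_left_le)
  qed
  also have "\<dots> = ((x_star / xL) ^ \<tau> - 1) / (1 - xL / x_star)"
    by (rule low_geometric_sum)
  finally show ?thesis .
qed

lemma high_sum_lower_bound:
  "(x_star / xL) ^ \<tau> * (1 - 2 * real \<tau> ^ 2 / real c) *
     ((1 - (x_star / xH) ^ \<tau>) / (1 - xL / x_star))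
     \<le> (\<Sum>j=\<tau>+1..c. \<pi> j) / \<pi> 0"
proof -
  let ?R = "(x_star / xL) ^ \<tau>" and ?q = "1 - 2 * real \<tau> ^ 2 / real c"
  have xH_pos: "xH > 0"
    using prices_symmetric xL_lt_xstar x_star_pos by linarith
  have "?R * ?q * ((1 - (x_star / xH) ^ \<tau>) / (1 - xL / x_star))
      = (\<Sum>k=1..\<tau>. ?R * ?q * (x_star / xH) ^ k)"
    by (simp only: high_geometric_sum[symmetric] sum_distrib_left)
  also have "\<dots> \<le> (\<Sum>k=1..\<tau>. \<pi> (k + \<tau>) / \<pi> 0)"
    \<comment> \<open>valid even when \<open>1 - 2\<tau>\<^sup>2/c < 0\<close>: the weights multiplying it are nonnegative\<close>
  proof (rule sum_mono)
    fix k assume k: "k \<in> {1..\<tau>}"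
    then have "k + \<tau> \<le> c"
      using tau_half by simp
    have "real (k + \<tau>) ^ 2 / (2 * real c) \<le> real (2 * \<tau>) ^ 2 / (2 * real c)"
      using k by (intro divide_right_mono power_mono) auto
    then have "?q \<le> (\<Prod>i<k + \<tau>. 1 - real i / real c)"
      using prod_one_minus_div_ge[OF \<open>k + \<tau> \<le> c\<close>] by (simp add: power2_eq_square)
    then have "?R * (x_star / xH) ^ k * ?q \<le> ?R * (x_star / xH) ^ k * (\<Prod>i<k + \<tau>. 1 - real i / real c)"
      using x_star_pos xL_pos xH_pos by (intro mult_left_mono) auto
    then show "?R * ?q * (x_star / xH) ^ k \<le> \<pi> (k + \<tau>) / \<pi> 0"
      using pi_ratio[OF \<open>k + \<tau> \<le> c\<close>] by (simp add: mult_ac)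
  qed
  also have "\<dots> = (\<Sum>j=1+\<tau>..\<tau>+\<tau>. \<pi> j / \<pi> 0)"
    by (rule sum.shift_bounds_cl_nat_ivl[symmetric])
  also have "\<dots> \<le> (\<Sum>j=\<tau>+1..c. \<pi> j / \<pi> 0)"
  proof (rule sum_mono2)
    show "\<pi> j / \<pi> 0 \<ge> 0" if "j \<in> {\<tau>+1..c} - {1+\<tau>..\<tau>+\<tau>}" for j
      using that ss pi0_pos unfolding is_steady_state_def by auto
  qed (use tau_half in auto)
  also have "\<dots> = (\<Sum>j=\<tau>+1..c. \<pi> j) / \<pi> 0"
    by (rule sum_divide_distrib[symmetric])
  finally show ?thesis .
qed

lemma low_minus_high_upper_bound:
  "(\<Sum>j=1..\<tau>. \<pi> j) / \<pi> 0 - (\<Sum>j=\<tau>+1..c. \<pi> j) / \<pi> 0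
     \<le> ((x_star / xL) ^ \<tau> / (1 - xL / x_star)) * (2 * real \<tau> ^ 2 / real c + (x_star / xH) ^ \<tau>)"
proof -
  define R t q D where "R = (x_star / xL) ^ \<tau>" and "t = (x_star / xH) ^ \<tau>"
    and "q = 2 * real \<tau> ^ 2 / real c" and "D = 1 - xL / x_star"
  have "R \<ge> 0" "t \<ge> 0" "q \<ge> 0"
    using x_star_pos xL_pos prices_symmetric xL_lt_xstar by (simp_all add: R_def t_def q_def)
  then have "R - 1 - R * (1 - q) * (1 - t) \<le> R * (q + t)"
    by (simp add: algebra_simps mult_nonneg_nonneg)
  moreover have "D > 0"
    using relative_gap_pos by (simp add: D_def)
  ultimately have "(R - 1 - R * (1 - q) * (1 - t)) / D \<le> R * (q + t) / D"
    by (simp add: divide_right_mono)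
  moreover have "(R - 1 - R * (1 - q) * (1 - t)) / D = (R - 1) / D - R * (1 - q) * ((1 - t) / D)"
    using \<open>D > 0\<close> by (simp add: field_simps)
  ultimately have "(R - 1) / D - R * (1 - q) * ((1 - t) / D) \<le> R / D * (q + t)"
    by simp
  then show ?thesis
    using low_sum_upper_bound high_sum_lower_bound unfolding R_def t_def q_def D_def
    by linarith
qed

end

theorem lemma2:
  fixes c \<tau> :: nat and lam d xL xH :: real and \<pi> :: "nat \<Rightarrow> real"
  assumes c_pos: "c \<ge> 1"
    and lam_pos: "lam > 0" and d_pos: "d > 0"
    and xstar_range: "0 < xstar c lam d" "xstar c lam d < 1"
    and tau_range: "\<tau> \<in> {1..c}" and tau_half: "real \<tau> \<le> real c / 2"
    and xL_pos: "0 < xL" and xL_lt_xH: "xL < xH" and xH_lt1: "xH < 1"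
    and symm: "xstar c lam d - xL = xH - xstar c lam d"
    and ss: "is_steady_state c lam d (two_price c xL xH \<tau>) \<pi>"
  shows "(\<Sum>j=1..\<tau>. \<pi> j) / \<pi> 0 \<ge>
           (1 - real \<tau> ^ 2 / (2 * real c)) *
           (((xstar c lam d / xL) ^ \<tau> - 1) / (1 - xL / xstar c lam d))
       \<and> (\<Sum>j=1..\<tau>. \<pi> j) / \<pi> 0 - (\<Sum>j=\<tau>+1..c. \<pi> j) / \<pi> 0 \<le>
           ((xstar c lam d / xL) ^ \<tau> / (1 - xL / xstar c lam d)) *
           (2 * real \<tau> ^ 2 / real c + (xstar c lam d / xH) ^ \<tau>)"
proof -
  interpret two_price_steady_state c \<tau> lam d xL xH \<pi>
  proof
    show "xL < xstar c lam d"
      using symm xL_lt_xH by linarith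
    show "2 * \<tau> \<le> c"
      using tau_half by linarith
  qed (fact lam_pos d_pos xL_pos symm ss)+
  show ?thesis
    using low_sum_lower_bound low_minus_high_upper_bound by simp
qed

end
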